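(* Let $f:\mathbb{R}^d\to\mathbb{R}$ satisfy the Standing Assumptions with constants $0<\mu\le L$ and $M>0$, and let $\{x_t\},\{G_t\},\{r_t\}$ be generated by General Sharpened-BFGS from some $x_0$, assuming $\nabla f(x_t)\ne0$ for all $t$ considered. Define $\xi_0=1$ and $\xi_t=\exp\!\left(2M\sum_{i=0}^{t-1}r_i\right)$ for $t\ge1$. Then for all $t\ge0$, $$\nabla^2 f(x_t)\preceq G_t\preceq \xi_t\frac{L}{\mu}\nabla^2 f(x_t).$$
   Context: Standing Assumptions: $f$ is twice differentiable, $\mu$-strongly convex and has $L$-Lipschitz gradient (so $\mu I\preceq\nabla^2f(x)\preceq LI$), and $f$ is strongly self-concordant with constant $M>0$: for all $x,y,z,w\in\mathbb{R}^d$, $\nabla^2f(y)-\nabla^2f(x)\preceq M\|y-x\|_z\nabla^2f(w)$, where $\|h\|_z:=\sqrt{h^\top\nabla^2f(z)h}$. For symmetric positive definite $A,G$ and $u\ne0$, $\mathrm{BFGS}(A,G,u):=G-\frac{Guu^\top G}{u^\top Gu}+\frac{Auu^\top A}{u^\top Au}$, and $\bar u(A,G):=\arg\max_{u\in\{e_1,\dots,e_d\}}\frac{u^\top Gu}{u^\top Au}$ (ties broken arbitrarily). General Sharpened-BFGS: set $G_0=LI$; for $t=0,1,2,\dots$: $x_{t+1}=x_t-G_t^{-1}\nabla f(x_t)$; $s_t=x_{t+1}-x_t$; $J_t=\int_0^1\nabla^2f(x_t+\tau s_t)\,d\tau$; $\bar G_t=\mathrm{BFGS}(J_t,G_t,s_t)$;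 $r_t=\|s_t\|_{x_t}$; $\hat G_t=(1+Mr_t/2)^2\bar G_t$; $\bar u=\bar u(\nabla^2f(x_{t+1}),\hat G_t)$; $G_{t+1}=\mathrm{BFGS}(\nabla^2f(x_{t+1}),\hat G_t,\bar u)$. *)

theory Defs
  imports "HOL-Analysis.Analysis"
begin

definition loewner_le :: "real^'n^'n \<Rightarrow> real^'n^'n \<Rightarrow> bool" where
  "loewner_le A B \<longleftrightarrow> (\<forall>v. v \<bullet> (A *v v) \<le> v \<bullet> (B *v v))"

definition strongly_convex_with :: "real \<Rightarrow> (real^'n \<Rightarrow> real) \<Rightarrow> bool" where
  "strongly_convex_with \<mu> f \<longleftrightarrow> convex_on UNIV (\<lambda>x. f x - \<mu> / 2 * (norm x)\<^sup>2)"

definition local_norm :: "(real^'n \<Rightarrow> real^'n^'n) \<Rightarrow> real^'n \<Rightarrow> real^'n \<Rightarrow> real" where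
  "local_norm H z h = sqrt (h \<bullet> (H z *v h))"

definition strongly_self_concordant :: "real \<Rightarrow> (real^'n \<Rightarrow> real^'n^'n) \<Rightarrow> bool" where
  "strongly_self_concordant M H \<longleftrightarrow>
     (\<forall>x y z w. loewner_le (H y - H x) ((M * local_norm H z (y - x)) *\<^sub>R H w))"

definition outer :: "real^'n \<Rightarrow> real^'n \<Rightarrow> real^'n^'n" where
  "outer a b = (\<chi> i j. a $ i * b $ j)"

definition BFGS :: "real^'n^'n \<Rightarrow> real^'n^'n \<Rightarrow> real^'n \<Rightarrow> real^'n^'n" where
  "BFGS A G u = G - (1 / (u \<bullet> (G *v u))) *\<^sub>R outer (G *v u) (u v* G)
                  + (1 / (u \<bullet> (A *v u))) *\<^sub>R outer (A *v u) (u v* A)"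

definition greedy_index :: "real^'n^'n \<Rightarrow> real^'n^'n \<Rightarrow> 'n \<Rightarrow> bool" where
  "greedy_index A G i \<longleftrightarrow>
     (\<forall>j. (G $ j $ j) / (A $ j $ j) \<le> (G $ i $ i) / (A $ i $ i))"

end

theory Submission
  imports Defs
begin

(* The Hessian of f is symmetric with \<mu> I \<preceq> \<nabla>\<^sup>2f \<preceq> L I, so G\<^sub>0 = L I satisfies both bounds with
   \<xi>\<^sub>0 = 1. A BFGS update BFGS(A, G, u) keeps the quadratic form of A along u and, on the
   complement, the form min\<^sub>a (v - a u)\<^sup>T G (v - a u), which is monotone in G; hence it preserves
   every two-sided relative bound between G and A. Strong self-concordance places the mean
   Hessian J\<^sub>t of the step between \<nabla>\<^sup>2f(x\<^sub>t) and \<nabla>\<^sup>2f(x\<^sub>t\<^sub>+\<^sub>1) up to a factor c\<^sub>t = 1 + M r\<^sub>t/2 on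
   either side. The correction c\<^sub>t\<^sup>2 restores the lower bound for \<nabla>\<^sup>2f(x\<^sub>t\<^sub>+\<^sub>1), while the upper
   bound loses the factor c\<^sub>t\<^sup>4 \<le> exp (2 M r\<^sub>t); these factors multiply up to \<xi>\<^sub>t. *)

section \<open>Hessian of a smooth strongly convex function\<close>

lemma line_has_derivative:
  "((\<lambda>t. y + t *\<^sub>R v) has_derivative (\<lambda>t. t *\<^sub>R v)) (at a)"
  by (auto intro!: derivative_eq_intros)

lemma gradient_along_line:
  fixes f :: "'a::real_inner \<Rightarrow> real"
  assumes "\<And>y. GDERIV f y :> g y"
  shows "((\<lambda>a. f (y + a *\<^sub>R v)) has_real_derivative (g (y + a *\<^sub>R v) \<bullet> v)) (at a)"
proof -
  have "(f has_derivative (\<lambda>h. h \<bullet> g (y + a *\<^sub>R v))) (at (y + a *\<^sub>R v))"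
    using assms unfolding gderiv_def .
  from has_derivative_compose[OF line_has_derivative this]
  have "((\<lambda>a. f (y + a *\<^sub>R v)) has_derivative (\<lambda>h. (h *\<^sub>R v) \<bullet> g (y + a *\<^sub>R v))) (at a)" .
  then show ?thesis
    unfolding has_field_derivative_def by (simp add: inner_commute mult.commute[of _ "_ \<bullet> _"])
qed

lemma derivative_along_line_inner:
  fixes g :: "'a::real_inner \<Rightarrow> 'a"
  assumes "(g has_derivative D) (at y)"
  shows "((\<lambda>t. g (y + t *\<^sub>R v) \<bullet> v) has_real_derivative (D v \<bullet> v)) (at 0)"
proof -
  interpret D: bounded_linear D using has_derivative_bounded_linear[OF assms] .
  have "(g has_derivative D) (at (y + 0 *\<^sub>R v))" using assms by simp
  from has_derivative_compose[OF line_has_derivative this]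
  have "((\<lambda>t. g (y + t *\<^sub>R v)) has_derivative (\<lambda>t. D (t *\<^sub>R v))) (at 0)" .
  then have "((\<lambda>t. g (y + t *\<^sub>R v) \<bullet> v) has_derivative (\<lambda>t. D (t *\<^sub>R v) \<bullet> v)) (at 0)"
    by (auto intro!: derivative_eq_intros)
  then show ?thesis
    unfolding has_field_derivative_def by (simp add: D.scaleR mult.commute[of _ "_ \<bullet> _"])
qed

lemma derivative_bounds_from_increments:
  fixes \<phi> :: "real \<Rightarrow> real"
  assumes "(\<phi> has_real_derivative d) (at 0)"
    and "\<And>t. 0 < t \<Longrightarrow> a * t \<le> \<phi> t - \<phi> 0" "\<And>t. 0 < t \<Longrightarrow> \<phi> t - \<phi> 0 \<le> b * t"
  shows "a \<le> d" "d \<le> b"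
proof -
  have "((\<lambda>t. (\<phi> t - \<phi> 0) / (t - 0)) \<longlongrightarrow> d) (at_right 0)"
    using assms(1) unfolding has_field_derivative_iff by (rule tendsto_mono[OF at_le, rotated]) simp
  then have lim: "((\<lambda>t. (\<phi> t - \<phi> 0) / t) \<longlongrightarrow> d) (at_right 0)" by simp
  have "\<forall>\<^sub>F t in at_right 0. a \<le> (\<phi> t - \<phi> 0) / t \<and> (\<phi> t - \<phi> 0) / t \<le> b"
    using eventually_at_right_less[of 0] by eventually_elim (use assms(2,3) in \<open>simp add: field_simps\<close>)
  then show "a \<le> d" "d \<le> b"
    by (auto intro: tendsto_lowerbound[OF lim] tendsto_upperbound[OF lim] elim: eventually_mono)
qed

lemma nonpos_if_le_mult_all_pos:
  fixes a C :: real
  assumes "\<And>e. 0 < e \<Longrightarrow> a \<le> e * C" and "0 \<le> C"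
  shows "a \<le> 0"
proof (rule field_le_epsilon)
  fix e :: real assume "0 < e"
  with assms(2) have "(e / (C + 1)) * C \<le> e" by (simp add: field_simps)
  with assms(1)[of "e / (C + 1)"] \<open>0 < e\<close> \<open>0 \<le> C\<close> show "a \<le> 0 + e" by simp
qed

lemma second_difference_estimate:
  fixes f :: "'a::real_inner \<Rightarrow> real"
  assumes grad: "\<And>y. GDERIV f y :> g y" and D: "linear D"
    and remainder: "\<And>h. norm h < d \<Longrightarrow> norm (g (y + h) - g y - D h) \<le> e * norm h"
    and e: "0 \<le> e" and s: "0 < s" "s * (norm u + norm v) < d"
  shows "\<bar>f (y + s *\<^sub>R v + s *\<^sub>R u) - f (y + s *\<^sub>R u) - f (y + s *\<^sub>R v) + f y - s\<^sup>2 * (u \<bullet> D v)\<bar>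
           \<le> s\<^sup>2 * (e * norm u * (norm v + 2 * norm u))"
proof -
  define \<psi> where "\<psi> a = f (y + s *\<^sub>R v + a *\<^sub>R u) - f (y + a *\<^sub>R u)" for a
  define \<psi>' where "\<psi>' a = g (y + s *\<^sub>R v + a *\<^sub>R u) \<bullet> u - g (y + a *\<^sub>R u) \<bullet> u" for a
  have "(\<psi> has_real_derivative \<psi>' a) (at a)" for a
    unfolding \<psi>_def \<psi>'_def by (intro DERIV_diff gradient_along_line grad)
  then obtain \<theta> where \<theta>: "0 < \<theta>" "\<theta> < s" "\<psi> s - \<psi> 0 = s * \<psi>' \<theta>"
    using MVT2[OF s(1), of \<psi> \<psi>'] by auto
  define h1 where "h1 = s *\<^sub>R v + \<theta> *\<^sub>R u"
  define h2 where "h2 = \<theta> *\<^sub>R u"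
  have h1: "norm h1 \<le> s * (norm v + norm u)"
    using norm_triangle_ineq[of "s *\<^sub>R v" "\<theta> *\<^sub>R u"] \<theta> s(1) mult_right_mono[of \<theta> s "norm u"]
    unfolding h1_def by (simp add: distrib_left)
  have h2: "norm h2 \<le> s * norm u"
    using \<theta> mult_right_mono[of \<theta> s "norm u"] unfolding h2_def by simp
  have "s * norm u \<le> s * (norm u + norm v)" using s(1) by (simp add: mult_left_mono)
  then have R1: "norm (g (y + h1) - g y - D h1) \<le> e * norm h1"
    and R2: "norm (g (y + h2) - g y - D h2) \<le> e * norm h2"
    using h1 h2 s(2) by (auto intro!: remainder simp: add.commute[of "norm v"])
  have "D h1 - D h2 = s *\<^sub>R D v"
    unfolding h1_def h2_def by (simp add: linear_add[OF D] linear_scale[OF D])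
  then have "\<psi>' \<theta> - s * (u \<bullet> D v) = u \<bullet> ((g (y + h1) - g y - D h1) - (g (y + h2) - g y - D h2))"
    unfolding \<psi>'_def h1_def h2_def by (simp add: inner_diff_right inner_commute algebra_simps)
  also have "\<bar>\<dots>\<bar> \<le> norm u * norm ((g (y + h1) - g y - D h1) - (g (y + h2) - g y - D h2))"
    by (rule Cauchy_Schwarz_ineq2)
  also have "\<dots> \<le> norm u * (e * norm h1 + e * norm h2)"
    by (intro mult_left_mono order_trans[OF norm_triangle_ineq4] add_mono R1 R2) auto
  also have "\<dots> \<le> norm u * (e * (s * (norm v + norm u)) + e * (s * norm u))"
    by (intro mult_left_mono add_mono) (use h1 h2 e in auto)
  also have "\<dots> = s * (e * norm u * (norm v + 2 * norm u))"
    by (simp add: algebra_simps)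
  finally have estimate: "\<bar>\<psi>' \<theta> - s * (u \<bullet> D v)\<bar> \<le> s * (e * norm u * (norm v + 2 * norm u))" .
  have "f (y + s *\<^sub>R v + s *\<^sub>R u) - f (y + s *\<^sub>R u) - f (y + s *\<^sub>R v) + f y - s\<^sup>2 * (u \<bullet> D v)
      = s * (\<psi>' \<theta> - s * (u \<bullet> D v))"
    using \<theta>(3) unfolding \<psi>_def by (simp add: power2_eq_square right_diff_distrib)
  with estimate s(1) show ?thesis
    by (simp add: abs_mult power2_eq_square mult.assoc)
qed

lemma gradient_derivative_symmetric:
  fixes f :: "'a::real_inner \<Rightarrow> real"
  assumes grad: "\<And>y. GDERIV f y :> g y" and hess: "\<And>y. (g has_derivative D y) (at y)"
  shows "u \<bullet> D y v = v \<bullet> D y u"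
proof -
  define C where "C = norm u * (norm v + 2 * norm u) + norm v * (norm u + 2 * norm v)"
  have D: "linear (D y)" using has_derivative_linear[OF hess] .
  have estimate: "\<bar>u \<bullet> D y v - v \<bullet> D y u\<bar> \<le> e * C" if e: "0 < e" for e
  proof -
    obtain d where d: "0 < d" "\<And>h. norm h < d \<Longrightarrow> norm (g (y + h) - g y - D y h) \<le> e * norm h"
      using hess[of y, unfolded has_derivative_at_alt] e by (metis add_diff_cancel_left')
    define N where "N = norm u + norm v + 1"
    define s where "s = d / (2 * N)"
    have N: "0 < N" by (simp add: N_def add_nonneg_pos)
    have s0: "0 < s" using d(1) N by (simp add: s_def)
    have "s * (norm u + norm v) \<le> s * N" using s0 by (simp add: N_def)
    also have "s * N = d / 2" using N by (simp add: s_def)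
    finally have s: "0 < s" "s * (norm u + norm v) < d" "s * (norm v + norm u) < d"
      using d(1) s0 by (simp_all add: add.commute[of "norm v"])
    define \<Delta> where "\<Delta> = f (y + s *\<^sub>R v + s *\<^sub>R u) - f (y + s *\<^sub>R u) - f (y + s *\<^sub>R v) + f y"
    have "f (y + s *\<^sub>R u + s *\<^sub>R v) = f (y + s *\<^sub>R v + s *\<^sub>R u)" by (simp add: add_ac)
    then have vu: "\<bar>\<Delta> - s\<^sup>2 * (v \<bullet> D y u)\<bar> \<le> s\<^sup>2 * (e * norm v * (norm u + 2 * norm v))"
      using second_difference_estimate[OF grad D d(2) less_imp_le[OF e] s(1,3)]
      unfolding \<Delta>_def by (simp add: algebra_simps)
    have uv: "\<bar>\<Delta> - s\<^sup>2 * (u \<bullet> D y v)\<bar> \<le> s\<^sup>2 * (e * norm u * (norm v + 2 * norm u))"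
      using second_difference_estimate[OF grad D d(2) less_imp_le[OF e] s(1,2)] unfolding \<Delta>_def .
    have "s\<^sup>2 * \<bar>u \<bullet> D y v - v \<bullet> D y u\<bar> = \<bar>s\<^sup>2 * (u \<bullet> D y v) - s\<^sup>2 * (v \<bullet> D y u)\<bar>"
      by (simp add: right_diff_distrib[symmetric] abs_mult)
    also have "\<dots> \<le> s\<^sup>2 * (e * norm u * (norm v + 2 * norm u)) + s\<^sup>2 * (e * norm v * (norm u + 2 * norm v))"
      using uv vu by arith
    also have "\<dots> = s\<^sup>2 * (e * C)"
      by (simp add: C_def algebra_simps)
    finally have "s\<^sup>2 * \<bar>u \<bullet> D y v - v \<bullet> D y u\<bar> \<le> s\<^sup>2 * (e * C)" .
    then show ?thesis using s(1) by simp
  qed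
  have "0 \<le> C" by (simp add: C_def)
  with estimate have "\<bar>u \<bullet> D y v - v \<bullet> D y u\<bar> \<le> 0" by (rule nonpos_if_le_mult_all_pos)
  then show ?thesis by simp
qed

lemma strongly_convex_gradient_increment:
  fixes f :: "real^'n \<Rightarrow> real"
  assumes grad: "\<And>y. GDERIV f y :> g y" and sconv: "strongly_convex_with \<mu> f" and t: "0 < t"
  shows "\<mu> * (norm v)\<^sup>2 * t \<le> (g (y + t *\<^sub>R v) - g y) \<bullet> v"
proof -
  define \<psi> where "\<psi> a = f (y + a *\<^sub>R v) - \<mu> / 2 * ((y \<bullet> y) + 2 * a * (y \<bullet> v) + a\<^sup>2 * (v \<bullet> v))" for a
  define \<psi>' where "\<psi>' a = g (y + a *\<^sub>R v) \<bullet> v - \<mu> * ((y \<bullet> v) + a * (v \<bullet> v))" for a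
  have \<psi>_norm: "\<psi> a = f (y + a *\<^sub>R v) - \<mu> / 2 * (norm (y + a *\<^sub>R v))\<^sup>2" for a
    unfolding \<psi>_def power2_norm_eq_inner
    by (simp add: inner_add_left inner_add_right inner_commute power2_eq_square algebra_simps)
  have der: "(\<psi> has_real_derivative \<psi>' a) (at a)" for a
    unfolding \<psi>_def \<psi>'_def
    by (rule DERIV_diff[OF gradient_along_line[OF grad], THEN DERIV_cong])
      (auto intro!: derivative_eq_intros simp: algebra_simps)
  have "convex_on UNIV \<psi>"
  proof (rule convex_onI)
    fix s a b :: real assume "0 < s" "s < 1"
    moreover have "y + ((1 - s) *\<^sub>R a + s *\<^sub>R b) *\<^sub>R v = (1 - s) *\<^sub>R (y + a *\<^sub>R v) + s *\<^sub>R (y + b *\<^sub>R v)"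
      by (simp add: algebra_simps)
    ultimately show "\<psi> ((1 - s) *\<^sub>R a + s *\<^sub>R b) \<le> (1 - s) * \<psi> a + s * \<psi> b"
      using convex_onD[OF sconv[unfolded strongly_convex_with_def], of s "y + a *\<^sub>R v" "y + b *\<^sub>R v"]
      unfolding \<psi>_norm by simp
  qed simp
  then have "\<psi>' 0 * (t - 0) \<le> \<psi> t - \<psi> 0" "\<psi>' t * (0 - t) \<le> \<psi> 0 - \<psi> t"
    by (rule convex_on_imp_above_tangent; auto intro: der)+
  then have "0 \<le> t * (\<psi>' t - \<psi>' 0)" by (simp add: algebra_simps)
  then have "0 \<le> \<psi>' t - \<psi>' 0" using t by (simp add: zero_le_mult_iff)
  then show ?thesis
    unfolding \<psi>'_def by (simp add: inner_diff_left power2_norm_eq_inner algebra_simps)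
qed

lemma hessian_quadratic_form_bounds:
  fixes f :: "real^'n \<Rightarrow> real" and H :: "real^'n \<Rightarrow> real^'n^'n"
  assumes grad: "\<And>y. GDERIV f y :> g y" and hess: "\<And>y. (g has_derivative (\<lambda>h. H y *v h)) (at y)"
    and sconv: "strongly_convex_with \<mu> f" and lip: "L-lipschitz_on UNIV g"
  shows "\<mu> * (norm v)\<^sup>2 \<le> v \<bullet> (H y *v v)" and "v \<bullet> (H y *v v) \<le> L * (norm v)\<^sup>2"
proof -
  have lower: "\<mu> * (norm v)\<^sup>2 * t \<le> g (y + t *\<^sub>R v) \<bullet> v - g (y + 0 *\<^sub>R v) \<bullet> v" if "0 < t" for t
    using strongly_convex_gradient_increment[OF grad sconv that] by (simp add: inner_diff_left)
  have upper: "g (y + t *\<^sub>R v) \<bullet> v - g (y + 0 *\<^sub>R v) \<bullet> v \<le> L * (norm v)\<^sup>2 * t" if "0 < t" for t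
  proof -
    have "g (y + t *\<^sub>R v) \<bullet> v - g (y + 0 *\<^sub>R v) \<bullet> v \<le> norm (g (y + t *\<^sub>R v) - g y) * norm v"
      using norm_cauchy_schwarz[of "g (y + t *\<^sub>R v) - g y" v] by (simp add: inner_diff_left)
    also have "\<dots> \<le> L * norm (t *\<^sub>R v) * norm v"
      using lipschitz_onD[OF lip, of "y + t *\<^sub>R v" y] by (simp add: dist_norm mult_right_mono)
    also have "\<dots> = L * (norm v)\<^sup>2 * t" using that by (simp add: power2_eq_square)
    finally show ?thesis .
  qed
  have "((\<lambda>t. g (y + t *\<^sub>R v) \<bullet> v) has_real_derivative ((H y *v v) \<bullet> v)) (at 0)"
    by (rule derivative_along_line_inner[OF hess])
  from derivative_bounds_from_increments[OF this lower upper]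
  show "\<mu> * (norm v)\<^sup>2 \<le> v \<bullet> (H y *v v)" and "v \<bullet> (H y *v v) \<le> L * (norm v)\<^sup>2"
    by (simp_all add: inner_commute)
qed

lemma inner_axis_matrix_vector: "axis i 1 \<bullet> ((A :: real^'n^'n) *v axis j 1) = A $ i $ j"
  by (simp add: matrix_vector_mult_basis inner_axis' column_def)

lemma hessian_transpose:
  fixes f :: "real^'n \<Rightarrow> real" and H :: "real^'n \<Rightarrow> real^'n^'n"
  assumes grad: "\<And>y. GDERIV f y :> g y" and hess: "\<And>y. (g has_derivative (\<lambda>h. H y *v h)) (at y)"
  shows "transpose (H y) = H y"
  using gradient_derivative_symmetric[OF grad hess, of "axis _ 1" y "axis _ 1"]
  by (simp add: vec_eq_iff transpose_def inner_axis_matrix_vector)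

section \<open>Loewner order and the BFGS update\<close>

lemma quadratic_form_scaleR [simp]: "v \<bullet> ((c *\<^sub>R A) *v v) = c * (v \<bullet> (A *v (v :: real^'n)))"
  by (simp add: scaleR_matrix_vector_assoc[symmetric])

lemma loewner_le_trans: "loewner_le A B \<Longrightarrow> loewner_le B C \<Longrightarrow> loewner_le A C"
  unfolding loewner_le_def by (meson order_trans)

lemma loewner_le_scaleR: "loewner_le A B \<Longrightarrow> 0 \<le> c \<Longrightarrow> loewner_le (c *\<^sub>R A) (c *\<^sub>R B)"
  unfolding loewner_le_def by (simp add: mult_left_mono)

lemma loewner_le_scaleR_mono:
  "(\<And>v. 0 \<le> v \<bullet> (A *v v)) \<Longrightarrow> c \<le> d \<Longrightarrow> loewner_le (c *\<^sub>R A) (d *\<^sub>R A)"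
  unfolding loewner_le_def by (simp add: mult_right_mono)

lemma loewner_le_trans_scaleR:
  "loewner_le A (c *\<^sub>R B) \<Longrightarrow> loewner_le B (d *\<^sub>R C) \<Longrightarrow> 0 \<le> c \<Longrightarrow> loewner_le A ((c * d) *\<^sub>R C)"
  using loewner_le_trans loewner_le_scaleR by fastforce

lemma symmetric_matrix_inner_commute:
  fixes A :: "real^'n^'n"
  assumes "transpose A = A"
  shows "x \<bullet> (A *v y) = y \<bullet> (A *v x)"
  by (metis assms dot_lmul_matrix inner_commute transpose_transpose vector_transpose_matrix)

lemma outer_mult_vector: "outer a b *v w = (b \<bullet> w) *\<^sub>R (a :: real^'n)"
proof -
  have "(\<Sum>j\<in>UNIV. a $ i * (b $ j * w $ j)) = (\<Sum>j\<in>UNIV. b $ j * w $ j) * a $ i" for i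
    by (simp add: sum_distrib_left[symmetric] mult.commute)
  then show ?thesis
    by (simp add: vec_eq_iff outer_def matrix_vector_mult_def inner_vec_def mult.assoc)
qed

lemma transpose_outer: "transpose (outer a b) = outer b (a :: real^'n)"
  by (simp add: vec_eq_iff outer_def transpose_def)

lemma BFGS_symmetric:
  fixes A G :: "real^'n^'n"
  assumes "transpose A = A" "transpose G = G"
  shows "transpose (BFGS A G u) = BFGS A G u"
proof -
  have "u v* A = A *v u" "u v* G = G *v u"
    by (metis assms transpose_transpose vector_transpose_matrix)+
  moreover have "transpose (X + Y) = transpose X + transpose Y"
    "transpose (X - Y) = transpose X - transpose Y" for X Y :: "real^'n^'n"
    by (simp_all add: vec_eq_iff transpose_def)
  ultimately show ?thesis
    unfolding BFGS_def by (simp add: transpose_scalar transpose_outer assms)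
qed

lemma BFGS_quadratic_form:
  fixes A G :: "real^'n^'n"
  assumes "transpose A = A" "transpose G = G"
  shows "v \<bullet> (BFGS A G u *v v)
    = v \<bullet> (G *v v) - (v \<bullet> (G *v u))\<^sup>2 / (u \<bullet> (G *v u)) + (v \<bullet> (A *v u))\<^sup>2 / (u \<bullet> (A *v u))"
  using symmetric_matrix_inner_commute[OF assms(1), of u v]
    symmetric_matrix_inner_commute[OF assms(2), of u v]
  by (simp add: BFGS_def matrix_vector_mult_add_rdistrib matrix_vector_mult_diff_rdistrib
      scaleR_matrix_vector_assoc[symmetric] outer_mult_vector dot_lmul_matrix
      inner_add_right inner_diff_right power2_eq_square)

(* The minimum of the quadratic form of G over the line v + \<real> u, see projected_form_shift. *)
definition projected_form :: "real^'n^'n \<Rightarrow> real^'n \<Rightarrow> real^'n \<Rightarrow> real" where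
  "projected_form G u v = v \<bullet> (G *v v) - (v \<bullet> (G *v u))\<^sup>2 / (u \<bullet> (G *v u))"

lemma projected_form_shift:
  fixes G :: "real^'n^'n"
  assumes "transpose G = G" "0 < u \<bullet> (G *v u)"
  shows "(v - a *\<^sub>R u) \<bullet> (G *v (v - a *\<^sub>R u))
    = projected_form G u v + (v \<bullet> (G *v u) - a * (u \<bullet> (G *v u)))\<^sup>2 / (u \<bullet> (G *v u))"
proof -
  have "(v - a *\<^sub>R u) \<bullet> (G *v (v - a *\<^sub>R u))
      = v \<bullet> (G *v v) - 2 * a * (v \<bullet> (G *v u)) + a\<^sup>2 * (u \<bullet> (G *v u))"
    using symmetric_matrix_inner_commute[OF assms(1), of u v]
    by (simp add: matrix_vector_mult_diff_distrib matrix_vector_mult_scaleR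
        inner_diff_left inner_diff_right power2_eq_square algebra_simps)
  moreover have "w - 2 * a * p + a\<^sup>2 * q = (w - p\<^sup>2 / q) + (p - a * q)\<^sup>2 / q" if "0 < q" for w p q :: real
    using that by (simp add: field_simps power2_eq_square)
  ultimately show ?thesis
    unfolding projected_form_def using assms(2) by simp
qed

lemma projected_form_mono:
  fixes A G :: "real^'n^'n"
  assumes "transpose A = A" "transpose G = G" "0 < u \<bullet> (A *v u)" "0 < u \<bullet> (G *v u)"
    and "loewner_le A (\<xi> *\<^sub>R G)"
  shows "projected_form A u v \<le> \<xi> * projected_form G u v"
proof -
  define a where "a = (v \<bullet> (G *v u)) / (u \<bullet> (G *v u))"
  have "projected_form A u v \<le> (v - a *\<^sub>R u) \<bullet> (A *v (v - a *\<^sub>R u))"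
    using projected_form_shift[OF assms(1,3)] assms(3) by simp
  also have "\<dots> \<le> \<xi> * ((v - a *\<^sub>R u) \<bullet> (G *v (v - a *\<^sub>R u)))"
    using assms(5) unfolding loewner_le_def by simp
  also have "(v - a *\<^sub>R u) \<bullet> (G *v (v - a *\<^sub>R u)) = projected_form G u v"
    using projected_form_shift[OF assms(2,4)] assms(4) by (simp add: a_def)
  finally show ?thesis .
qed

lemma BFGS_loewner_bounds:
  fixes A G :: "real^'n^'n"
  assumes sym: "transpose A = A" "transpose G = G"
    and pos: "0 < u \<bullet> (A *v u)" "0 < u \<bullet> (G *v u)"
  shows "loewner_le A (\<xi> *\<^sub>R G) \<Longrightarrow> 1 \<le> \<xi> \<Longrightarrow> loewner_le A (\<xi> *\<^sub>R BFGS A G u)"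
    and "loewner_le G (\<eta> *\<^sub>R A) \<Longrightarrow> 1 \<le> \<eta> \<Longrightarrow> loewner_le (BFGS A G u) (\<eta> *\<^sub>R A)"
proof -
  define Q where "Q v = (v \<bullet> (A *v u))\<^sup>2 / (u \<bullet> (A *v u))" for v
  have Q: "0 \<le> Q v" for v unfolding Q_def using pos(1) by simp
  have BFGS: "v \<bullet> (BFGS A G u *v v) = projected_form G u v + Q v" for v
    unfolding BFGS_quadratic_form[OF sym] projected_form_def Q_def by simp
  have A: "v \<bullet> (A *v v) = projected_form A u v + Q v" for v
    unfolding projected_form_def Q_def by simp
  show "loewner_le A (\<xi> *\<^sub>R BFGS A G u)" if "loewner_le A (\<xi> *\<^sub>R G)" "1 \<le> \<xi>"
    using projected_form_mono[OF sym pos that(1)] mult_right_mono[OF that(2) Q]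
    unfolding loewner_le_def by (simp add: A BFGS distrib_left add_mono)
  show "loewner_le (BFGS A G u) (\<eta> *\<^sub>R A)" if "loewner_le G (\<eta> *\<^sub>R A)" "1 \<le> \<eta>"
    using projected_form_mono[OF sym(2,1) pos(2,1) that(1)] mult_right_mono[OF that(2) Q]
    unfolding loewner_le_def by (simp add: A BFGS distrib_left add_mono)
qed

lemma matrix_inv_right:
  fixes A :: "real^'n^'n"
  assumes "invertible A"
  shows "A ** matrix_inv A = mat 1"
  using someI_ex[OF assms[unfolded invertible_def]] unfolding matrix_inv_def by blast

lemma pos_def_invertible:
  fixes A :: "real^'n^'n"
  assumes "\<And>v. v \<noteq> 0 \<Longrightarrow> 0 < v \<bullet> (A *v v)"
  shows "invertible A"
proof -
  have "\<forall>x. A *v x = 0 \<longrightarrow> x = 0" using assms by force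
  then show ?thesis using matrix_left_invertible_ker invertible_left_inverse by blast
qed

lemma pos_def_inverse_mult_nonzero:
  fixes A :: "real^'n^'n"
  assumes "\<And>v. v \<noteq> 0 \<Longrightarrow> 0 < v \<bullet> (A *v v)" and "d \<noteq> 0"
  shows "matrix_inv A *v d \<noteq> 0"
proof
  assume "matrix_inv A *v d = 0"
  then have "(A ** matrix_inv A) *v d = 0" by (simp flip: matrix_vector_mul_assoc)
  with assms show False by (simp add: matrix_inv_right[OF pos_def_invertible])
qed

section \<open>Strong self-concordance along a segment\<close>

lemma affine_has_integral_unit_interval:
  "((\<lambda>\<tau>::real. \<alpha> + \<beta> * \<tau>) has_integral (\<alpha> + \<beta> / 2)) {0..1}"
proof -
  have "((\<lambda>\<tau>. \<alpha> * \<tau> + \<beta> * \<tau>\<^sup>2 / 2) has_real_derivative (\<alpha> + \<beta> * \<tau>)) (at \<tau> within {0..1})" for \<tau>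
    by (auto intro!: derivative_eq_intros simp: power2_eq_square)
  then have "((\<lambda>\<tau>. \<alpha> + \<beta> * \<tau>) has_integral ((\<alpha> * 1 + \<beta> * 1\<^sup>2 / 2) - (\<alpha> * 0 + \<beta> * 0\<^sup>2 / 2))) {0..1}"
    by (intro fundamental_theorem_of_calculus) (auto simp: has_real_derivative_iff_has_vector_derivative)
  then show ?thesis by simp
qed

lemma distance_to_endpoint_has_integral:
  assumes "p \<in> {0, 1::real}"
  shows "((\<lambda>\<tau>. \<alpha> + \<beta> * \<bar>\<tau> - p\<bar>) has_integral (\<alpha> + \<beta> / 2)) {0..1}"
  using assms
proof
  assume "p = 0"
  then show ?thesis
    by (subst has_integral_cong[where g = "\<lambda>\<tau>. \<alpha> + \<beta> * \<tau>"])
      (auto simp: affine_has_integral_unit_interval)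
next
  assume "p \<in> {1}"
  have "(\<alpha> + \<beta>) + (- \<beta>) / 2 = \<alpha> + \<beta> / 2" by simp
  note affine = affine_has_integral_unit_interval[of "\<alpha> + \<beta>" "- \<beta>", unfolded this]
  show ?thesis
  proof (rule has_integral_cong[THEN iffD2, OF _ affine])
    show "\<alpha> + \<beta> * \<bar>\<tau> - p\<bar> = (\<alpha> + \<beta>) + (- \<beta>) * \<tau>" if "\<tau> \<in> {0..1}" for \<tau>
      using that \<open>p \<in> {1}\<close> by (auto simp: algebra_simps)
  qed
qed

lemma integral_bounds_of_relative_variation:
  fixes q :: "real \<Rightarrow> real"
  assumes p: "p \<in> {0, 1}" and q: "q integrable_on {0..1}" and a: "0 \<le> a"
    and nonneg: "\<And>\<tau>. \<tau> \<in> {0..1} \<Longrightarrow> 0 \<le> q \<tau>"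
    and above: "\<And>\<tau>. \<tau> \<in> {0..1} \<Longrightarrow> q \<tau> \<le> (1 + a * \<bar>\<tau> - p\<bar>) * q p"
    and below: "\<And>\<tau>. \<tau> \<in> {0..1} \<Longrightarrow> q p \<le> (1 + a * \<bar>\<tau> - p\<bar>) * q \<tau>"
  shows "integral {0..1} q \<le> (1 + a / 2) * q p" and "q p \<le> (1 + a / 2) * integral {0..1} q"
proof -
  define c where "c = 1 + a / 2"
  have c: "0 < c" using a by (simp add: c_def)
  have "integral {0..1} q \<le> q p + (a * q p) / 2"
    using distance_to_endpoint_has_integral[OF p, of "q p" "a * q p"] above
    by (intro has_integral_le[OF integrable_integral[OF q]]) (auto simp: algebra_simps)
  then show "integral {0..1} q \<le> (1 + a / 2) * q p" by (simp add: algebra_simps)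
  \<comment> \<open>The factor \<open>1 + a\<bar>\<tau> - p\<bar>\<close> in \<open>below\<close> is traded for a term affine in \<open>\<bar>\<tau> - p\<bar>\<close>
      using \<open>(c + x)(c - x) \<le> c\<^sup>2\<close> with \<open>x = a (\<bar>\<tau> - p\<bar> - 1/2)\<close>.\<close>
  have "q p * (c + a / 2) / c\<^sup>2 + (- (a * q p / c\<^sup>2)) * \<bar>\<tau> - p\<bar> \<le> q \<tau>" if \<tau>: "\<tau> \<in> {0..1}" for \<tau>
  proof -
    define x where "x = a * (\<bar>\<tau> - p\<bar> - 1 / 2)"
    have "\<bar>\<tau> - p\<bar> \<le> 1" using p \<tau> by auto
    then have "0 \<le> c - x" using a mult_left_mono[of "\<bar>\<tau> - p\<bar>" 1 a] by (simp add: x_def c_def algebra_simps)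
    then have "q p * (c - x) \<le> ((c + x) * q \<tau>) * (c - x)"
      using below[OF \<tau>] by (intro mult_right_mono) (simp_all add: x_def c_def algebra_simps)
    also have "\<dots> = (c\<^sup>2 - x\<^sup>2) * q \<tau>" by (simp add: algebra_simps power2_eq_square)
    also have "\<dots> \<le> c\<^sup>2 * q \<tau>" using nonneg[OF \<tau>] by (simp add: mult_right_mono)
    finally have "q p * (c - x) / c\<^sup>2 \<le> q \<tau>" using c by (simp add: divide_le_eq mult.commute)
    moreover have "q p * (c - x) / c\<^sup>2 = q p * (c + a / 2) / c\<^sup>2 + (- (a * q p / c\<^sup>2)) * \<bar>\<tau> - p\<bar>"
      using c by (simp add: x_def field_simps)
    ultimately show ?thesis by simp
  qed
  then have "(q p * (c + a / 2) / c\<^sup>2) + (- (a * q p / c\<^sup>2)) / 2 \<le> integral {0..1} q"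
    using distance_to_endpoint_has_integral[OF p, of "q p * (c + a / 2) / c\<^sup>2" "- (a * q p / c\<^sup>2)"]
    by (intro has_integral_le[OF _ integrable_integral[OF q]]) auto
  also have "(q p * (c + a / 2) / c\<^sup>2) + (- (a * q p / c\<^sup>2)) / 2 = q p / c"
    using c by (simp add: field_simps power2_eq_square)
  finally show "q p \<le> (1 + a / 2) * integral {0..1} q"
    using c by (simp add: c_def divide_le_eq mult.commute)
qed

lemma one_plus_half_pow4_le_exp:
  fixes a :: real
  assumes "0 \<le> a"
  shows "(1 + a / 2) ^ 4 \<le> exp (2 * a)"
proof -
  have "(1 + a / 2) ^ 4 \<le> exp (a / 2) ^ 4" using assms by (intro power_mono exp_ge_add_one_self) auto
  also have "\<dots> = exp (2 * a)" by (simp flip: exp_of_nat_mult)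
  finally show ?thesis .
qed

lemma local_norm_scaleR: "local_norm H z (a *\<^sub>R s) = \<bar>a\<bar> * local_norm H z s"
proof -
  have "(a *\<^sub>R s) \<bullet> (H z *v (a *\<^sub>R s)) = a\<^sup>2 * (s \<bullet> (H z *v s))"
    by (simp add: matrix_vector_mult_scaleR power2_eq_square)
  then show ?thesis unfolding local_norm_def by (simp add: real_sqrt_mult)
qed

lemma symmetric_matrix_polarization:
  fixes A :: "real^'n^'n"
  assumes "transpose A = A"
  shows "A $ i $ j = ((axis i 1 + axis j 1) \<bullet> (A *v (axis i 1 + axis j 1))
     - (axis i 1 - axis j 1) \<bullet> (A *v (axis i 1 - axis j 1))) / 4"
  using symmetric_matrix_inner_commute[OF assms, of "axis j 1" "axis i 1"]
  by (simp add: matrix_vector_right_distrib matrix_vector_mult_diff_distrib inner_add_left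
      inner_add_right inner_diff_left inner_diff_right inner_axis_matrix_vector)

definition mean_hessian :: "(real^'n \<Rightarrow> real^'n^'n) \<Rightarrow> real^'n \<Rightarrow> real^'n \<Rightarrow> real^'n^'n" where
  "mean_hessian H x s = integral {0..1} (\<lambda>\<tau>. H (x + \<tau> *\<^sub>R s))"

locale self_concordant_hessian =
  fixes M :: real and H :: "real^'n \<Rightarrow> real^'n^'n"
  assumes self_concordant: "strongly_self_concordant M H" and M_nonneg: "0 \<le> M"
    and symmetric: "\<And>y. transpose (H y) = H y"
    and pos_def: "\<And>y v. v \<noteq> 0 \<Longrightarrow> 0 < v \<bullet> (H y *v v)"
begin

lemma pos_semidef: "0 \<le> v \<bullet> (H y *v v)"
  using pos_def[of v y] by (cases "v = 0") auto

lemma quadratic_form_variation: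
  "w \<bullet> (H y *v w) - w \<bullet> (H x *v w) \<le> M * local_norm H z (y - x) * (w \<bullet> (H w' *v w))"
proof -
  have "loewner_le (H y - H x) ((M * local_norm H z (y - x)) *\<^sub>R H w')"
    using self_concordant unfolding strongly_self_concordant_def by blast
  then show ?thesis
    unfolding loewner_le_def by (simp add: matrix_vector_mult_diff_rdistrib inner_diff_right)
qed

lemma quadratic_form_lipschitz_on_line:
  "(M * local_norm H x s * (w \<bullet> (H x *v w)))-lipschitz_on S (\<lambda>\<tau>. w \<bullet> (H (x + \<tau> *\<^sub>R s) *v w))"
proof (rule lipschitz_onI)
  show "0 \<le> M * local_norm H x s * (w \<bullet> (H x *v w))"
    using M_nonneg pos_semidef by (simp add: local_norm_def)
  have bound: "w \<bullet> (H (x + a *\<^sub>R s) *v w) - w \<bullet> (H (x + b *\<^sub>R s) *v w)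
      \<le> M * local_norm H x s * (w \<bullet> (H x *v w)) * \<bar>a - b\<bar>" for a b
    using quadratic_form_variation[of w "x + a *\<^sub>R s" "x + b *\<^sub>R s" x x]
    by (simp add: local_norm_scaleR algebra_simps flip: scaleR_diff_left)
  show "dist (w \<bullet> (H (x + a *\<^sub>R s) *v w)) (w \<bullet> (H (x + b *\<^sub>R s) *v w))
      \<le> M * local_norm H x s * (w \<bullet> (H x *v w)) * dist a b" for a b
    using bound[of a b] bound[of b a] by (simp add: dist_real_def abs_le_iff abs_minus_commute[of b])
qed

lemma continuous_on_line: "continuous_on S (\<lambda>\<tau>. H (x + \<tau> *\<^sub>R s))"
proof -
  have form: "continuous_on S (\<lambda>\<tau>. w \<bullet> (H (x + \<tau> *\<^sub>R s) *v w))" for w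
    by (rule lipschitz_on_continuous_on[OF quadratic_form_lipschitz_on_line])
  have "continuous_on S (\<lambda>\<tau>. H (x + \<tau> *\<^sub>R s) $ i $ j)" for i j
    unfolding symmetric_matrix_polarization[OF symmetric]
    by (intro continuous_on_divide continuous_on_diff form continuous_on_const) simp
  then show ?thesis
    by (subst vec_lambda_eta[symmetric], intro continuous_on_vec_lambda)
      (subst vec_lambda_eta[symmetric], intro continuous_on_vec_lambda)
qed

lemma mean_hessian_quadratic_form:
  "(\<lambda>\<tau>. v \<bullet> (H (x + \<tau> *\<^sub>R s) *v v)) integrable_on {0..1}"
  "v \<bullet> (mean_hessian H x s *v v) = integral {0..1} (\<lambda>\<tau>. v \<bullet> (H (x + \<tau> *\<^sub>R s) *v v))"
proof -
  have "bounded_linear (\<lambda>A::real^'n^'n. v \<bullet> (A *v v))"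
    by (auto intro!: linear_conv_bounded_linear[THEN iffD1] linearI
        simp: matrix_vector_mult_add_rdistrib inner_add_right)
  note lin = integral_linear[OF _ this] integrable_linear[OF _ this]
  have "(\<lambda>\<tau>. H (x + \<tau> *\<^sub>R s)) integrable_on {0..1::real}"
    by (rule integrable_continuous_interval[OF continuous_on_line])
  from lin[OF this] show "(\<lambda>\<tau>. v \<bullet> (H (x + \<tau> *\<^sub>R s) *v v)) integrable_on {0..1}"
    "v \<bullet> (mean_hessian H x s *v v) = integral {0..1} (\<lambda>\<tau>. v \<bullet> (H (x + \<tau> *\<^sub>R s) *v v))"
    by (simp_all add: o_def mean_hessian_def)
qed

lemma mean_hessian_symmetric: "transpose (mean_hessian H x s) = mean_hessian H x s"
proof -
  have "bounded_linear (transpose :: real^'n^'n \<Rightarrow> real^'n^'n)"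
    by (auto intro!: linear_conv_bounded_linear[THEN iffD1] linearI
        simp: vec_eq_iff transpose_def)
  from integral_linear[OF integrable_continuous_interval[OF continuous_on_line] this]
  show ?thesis by (simp add: o_def symmetric mean_hessian_def)
qed

lemma mean_hessian_endpoint_bounds:
  fixes x s z :: "real^'n"
  assumes p: "p \<in> {0, 1}"
  defines "c \<equiv> 1 + M * local_norm H z s / 2"
  shows "loewner_le (mean_hessian H x s) (c *\<^sub>R H (x + p *\<^sub>R s))"
    and "loewner_le (H (x + p *\<^sub>R s)) (c *\<^sub>R mean_hessian H x s)"
proof -
  define a where "a = M * local_norm H z s"
  have a: "0 \<le> a" using M_nonneg pos_semidef by (simp add: a_def local_norm_def)
  have diff: "(x + \<sigma> *\<^sub>R s) - (x + \<tau> *\<^sub>R s) = (\<sigma> - \<tau>) *\<^sub>R s" for \<sigma> \<tau> :: real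
    by (simp add: algebra_simps)
  have "v \<bullet> (mean_hessian H x s *v v) \<le> c * (v \<bullet> (H (x + p *\<^sub>R s) *v v)) \<and>
        v \<bullet> (H (x + p *\<^sub>R s) *v v) \<le> c * (v \<bullet> (mean_hessian H x s *v v))" for v
  proof -
    define q where "q \<tau> = v \<bullet> (H (x + \<tau> *\<^sub>R s) *v v)" for \<tau>
    have variation: "q \<sigma> \<le> (1 + a * \<bar>\<sigma> - \<tau>\<bar>) * q \<tau>" for \<sigma> \<tau>
      using quadratic_form_variation[of v "x + \<sigma> *\<^sub>R s" "x + \<tau> *\<^sub>R s" z "x + \<tau> *\<^sub>R s"]
      unfolding q_def diff local_norm_scaleR a_def by (simp add: algebra_simps)
    have "q integrable_on {0..1}"
      unfolding q_def by (rule mean_hessian_quadratic_form(1))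
    from integral_bounds_of_relative_variation[OF p this a] variation[of _ p] variation[of p]
    have "integral {0..1} q \<le> (1 + a / 2) * q p \<and> q p \<le> (1 + a / 2) * integral {0..1} q"
      using pos_semidef by (simp add: q_def abs_minus_commute)
    then show ?thesis
      unfolding q_def mean_hessian_quadratic_form(2) c_def a_def by simp
  qed
  then show "loewner_le (mean_hessian H x s) (c *\<^sub>R H (x + p *\<^sub>R s))"
    and "loewner_le (H (x + p *\<^sub>R s)) (c *\<^sub>R mean_hessian H x s)"
    unfolding loewner_le_def by simp_all
qed

section \<open>Sharpened-BFGS\<close>

lemma corrected_BFGS_bounds:
  fixes x s :: "real^'n" and G :: "real^'n^'n"
  assumes G: "transpose G = G" "loewner_le (H x) G" "loewner_le G (E *\<^sub>R H x)"
    and E: "1 \<le> E" and s: "s \<noteq> 0"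
  defines "c \<equiv> 1 + M * local_norm H x s / 2"
  defines "G\<^sub>h \<equiv> c\<^sup>2 *\<^sub>R BFGS (mean_hessian H x s) G s"
  shows "transpose G\<^sub>h = G\<^sub>h \<and> loewner_le (H (x + s)) G\<^sub>h \<and> loewner_le G\<^sub>h ((E * c ^ 4) *\<^sub>R H (x + s))"
proof -
  define J where "J = mean_hessian H x s"
  define B where "B = BFGS J G s"
  have sym_J: "transpose J = J" using mean_hessian_symmetric by (simp add: J_def)
  have c: "1 \<le> c" using M_nonneg pos_semidef by (simp add: c_def local_norm_def)
  have J_start: "loewner_le J (c *\<^sub>R H x)" "loewner_le (H x) (c *\<^sub>R J)"
    using mean_hessian_endpoint_bounds[of 0 x s x] by (simp_all add: J_def c_def)
  have J_end: "loewner_le J (c *\<^sub>R H (x + s))" "loewner_le (H (x + s)) (c *\<^sub>R J)"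
    using mean_hessian_endpoint_bounds[of 1 x s x] by (simp_all add: J_def c_def)
  have "0 < s \<bullet> (H x *v s)" using pos_def[OF s] .
  moreover have "s \<bullet> (H x *v s) \<le> c * (s \<bullet> (J *v s))" "s \<bullet> (H x *v s) \<le> s \<bullet> (G *v s)"
    using J_start(2) G(2) unfolding loewner_le_def by simp_all
  ultimately have "0 < c * (s \<bullet> (J *v s))" and pos_G: "0 < s \<bullet> (G *v s)" by linarith+
  then have pos_J: "0 < s \<bullet> (J *v s)" using c by (simp add: zero_less_mult_iff)
  have "loewner_le J ((c * 1) *\<^sub>R G)"
    using loewner_le_trans_scaleR[OF J_start(1), where d = 1 and C = G] G(2) c by simp
  then have B_lower: "loewner_le J (c *\<^sub>R B)"
    unfolding B_def using BFGS_loewner_bounds(1)[OF sym_J G(1) pos_J pos_G] c by simp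
  have "loewner_le G ((E * c) *\<^sub>R J)"
    by (rule loewner_le_trans_scaleR[OF G(3) J_start(2)]) (use E in simp)
  then have B_upper: "loewner_le B ((E * c) *\<^sub>R J)"
    unfolding B_def using BFGS_loewner_bounds(2)[OF sym_J G(1) pos_J pos_G] mult_mono[OF E c] E by simp
  have "loewner_le (H (x + s)) ((c * c) *\<^sub>R B)"
    using loewner_le_trans_scaleR[OF J_end(2) B_lower] c by simp
  moreover have "loewner_le G\<^sub>h ((c\<^sup>2 * (E * c)) *\<^sub>R J)"
    unfolding G\<^sub>h_def B_def[symmetric] J_def[symmetric] using loewner_le_scaleR[OF B_upper, of "c\<^sup>2"] by simp
  then have "loewner_le G\<^sub>h ((c\<^sup>2 * (E * c) * c) *\<^sub>R H (x + s))"
    by (rule loewner_le_trans_scaleR[OF _ J_end(1)]) (use E c in simp)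
  then have "loewner_le G\<^sub>h ((E * c ^ 4) *\<^sub>R H (x + s))"
    by (simp add: power2_eq_square power4_eq_xxxx mult_ac)
  ultimately show ?thesis
    by (simp add: G\<^sub>h_def B_def J_def power2_eq_square transpose_scalar BFGS_symmetric sym_J[unfolded J_def] G(1))
qed

lemma sharpened_BFGS_step:
  fixes x s u :: "real^'n" and G :: "real^'n^'n"
  assumes G: "transpose G = G" "loewner_le (H x) G" "loewner_le G (E *\<^sub>R H x)"
    and E: "1 \<le> E" and s: "s \<noteq> 0" and u: "u \<noteq> 0"
  defines "c \<equiv> 1 + M * local_norm H x s / 2"
  defines "G' \<equiv> BFGS (H (x + s)) (c\<^sup>2 *\<^sub>R BFGS (mean_hessian H x s) G s) u"
  shows "transpose G' = G' \<and> loewner_le (H (x + s)) G' \<and> loewner_le G' ((E * c ^ 4) *\<^sub>R H (x + s))"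
proof -
  define G\<^sub>h where "G\<^sub>h = c\<^sup>2 *\<^sub>R BFGS (mean_hessian H x s) G s"
  have G\<^sub>h: "transpose G\<^sub>h = G\<^sub>h" "loewner_le (H (x + s)) (1 *\<^sub>R G\<^sub>h)" "loewner_le G\<^sub>h ((E * c ^ 4) *\<^sub>R H (x + s))"
    using corrected_BFGS_bounds[OF G E s] by (simp_all add: G\<^sub>h_def c_def)
  have pos_H: "0 < u \<bullet> (H (x + s) *v u)" using pos_def[OF u] .
  moreover have "u \<bullet> (H (x + s) *v u) \<le> u \<bullet> (G\<^sub>h *v u)"
    using G\<^sub>h(2) by (simp add: loewner_le_def)
  ultimately have pos_G\<^sub>h: "0 < u \<bullet> (G\<^sub>h *v u)" by linarith
  have c: "1 \<le> c" using M_nonneg pos_semidef by (simp add: c_def local_norm_def)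
  have "1 \<le> E * c ^ 4" using mult_mono[OF E one_le_power[OF c]] E by simp
  then show ?thesis
    using BFGS_loewner_bounds(1)[OF symmetric G\<^sub>h(1) pos_H pos_G\<^sub>h G\<^sub>h(2) order_refl]
      BFGS_loewner_bounds(2)[OF symmetric G\<^sub>h(1) pos_H pos_G\<^sub>h G\<^sub>h(3)]
      BFGS_symmetric[OF symmetric G\<^sub>h(1)]
    by (simp add: G'_def G\<^sub>h_def)
qed

lemma sharpened_BFGS_loewner_bounds:
  fixes x d :: "nat \<Rightarrow> real^'n" and G :: "nat \<Rightarrow> real^'n^'n" and ui :: "nat \<Rightarrow> 'n"
  assumes base: "transpose (G 0) = G 0" "loewner_le (H (x 0)) (G 0)" "loewner_le (G 0) (\<kappa> *\<^sub>R H (x 0))"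
    and \<kappa>: "1 \<le> \<kappa>"
    and step: "\<And>k. x (Suc k) = x k - matrix_inv (G k) *v d k"
    and update: "\<And>k. G (Suc k) = BFGS (H (x (Suc k)))
        ((1 + M * local_norm H (x k) (x (Suc k) - x k) / 2)\<^sup>2 *\<^sub>R
           BFGS (mean_hessian H (x k) (x (Suc k) - x k)) (G k) (x (Suc k) - x k))
        (axis (ui k) 1)"
    and nonzero: "\<And>k. k < t \<Longrightarrow> d k \<noteq> 0"
  shows "loewner_le (H (x t)) (G t) \<and>
    loewner_le (G t) ((exp (2 * M * (\<Sum>i<t. local_norm H (x i) (x (Suc i) - x i))) * \<kappa>) *\<^sub>R H (x t))"
proof -
  define r where "r k = local_norm H (x k) (x (Suc k) - x k)" for k
  define E where "E k = exp (2 * M * (\<Sum>i<k. r i)) * \<kappa>" for k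
  have r: "0 \<le> r k" for k using pos_semidef by (simp add: r_def local_norm_def)
  have E: "1 \<le> E k" for k
    using mult_mono[OF _ \<kappa>, of 1 "exp (2 * M * (\<Sum>i<k. r i))"] M_nonneg r
    by (simp add: E_def sum_nonneg)
  have "k \<le> t \<longrightarrow> transpose (G k) = G k \<and> loewner_le (H (x k)) (G k) \<and> loewner_le (G k) (E k *\<^sub>R H (x k))"
    for k
  proof (induction k)
    case 0
    show ?case using base by (simp add: E_def)
  next
    case (Suc k)
    show ?case
    proof
      assume "Suc k \<le> t"
      with Suc.IH have G: "transpose (G k) = G k" "loewner_le (H (x k)) (G k)"
        "loewner_le (G k) (E k *\<^sub>R H (x k))" by simp_all
      have "v \<noteq> 0 \<Longrightarrow> 0 < v \<bullet> (G k *v v)" for v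
        using pos_def[of v "x k"] G(2) unfolding loewner_le_def by (meson less_le_trans)
      then have "x (Suc k) - x k \<noteq> 0"
        using pos_def_inverse_mult_nonzero[of "G k" "d k"] nonzero[of k] step[of k] \<open>Suc k \<le> t\<close> by simp
      from sharpened_BFGS_step[OF G E this, of "axis (ui k) 1"]
      have next_bounds: "transpose (G (Suc k)) = G (Suc k) \<and> loewner_le (H (x (Suc k))) (G (Suc k)) \<and>
          loewner_le (G (Suc k)) ((E k * (1 + M * r k / 2) ^ 4) *\<^sub>R H (x (Suc k)))"
        by (simp add: update[of k] r_def)
      have "E k * (1 + M * r k / 2) ^ 4 \<le> E k * exp (2 * (M * r k))"
        using one_plus_half_pow4_le_exp[of "M * r k"] M_nonneg r[of k] E[of k] by simp
      also have "E k * exp (2 * (M * r k)) = E (Suc k)"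
        by (simp add: E_def exp_add distrib_left mult_ac)
      finally have "loewner_le ((E k * (1 + M * r k / 2) ^ 4) *\<^sub>R H (x (Suc k))) (E (Suc k) *\<^sub>R H (x (Suc k)))"
        by (intro loewner_le_scaleR_mono pos_semidef)
      with next_bounds show "transpose (G (Suc k)) = G (Suc k) \<and> loewner_le (H (x (Suc k))) (G (Suc k)) \<and>
          loewner_le (G (Suc k)) (E (Suc k) *\<^sub>R H (x (Suc k)))"
        using loewner_le_trans by blast
    qed
  qed
  then show ?thesis by (simp add: E_def r_def)
qed

end

theorem mainTheorem4:
  fixes f :: "real^'n \<Rightarrow> real"
    and g :: "real^'n \<Rightarrow> real^'n"
    and H :: "real^'n \<Rightarrow> real^'n^'n"
    and \<mu> L M :: real
    and x :: "nat \<Rightarrow> real^'n"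
    and G :: "nat \<Rightarrow> real^'n^'n"
    and ui :: "nat \<Rightarrow> 'n"
    and t :: nat
  assumes grad: "\<And>y. GDERIV f y :> g y"
    and hess: "\<And>y. (g has_derivative (\<lambda>h. H y *v h)) (at y)"
    and mu_pos: "0 < \<mu>" and mu_le_L: "\<mu> \<le> L" and M_pos: "0 < M"
    and sconv: "strongly_convex_with \<mu> f"
    and lip: "L-lipschitz_on UNIV g"
    and ssc: "strongly_self_concordant M H"
    and G0: "G 0 = L *\<^sub>R mat 1"
    and step: "\<And>k. x (Suc k) = x k - matrix_inv (G k) *v g (x k)"
    and greedy: "\<And>k. greedy_index (H (x (Suc k)))
        ((1 + M * local_norm H (x k) (x (Suc k) - x k) / 2)\<^sup>2 *\<^sub>R
           BFGS (integral {0..1} (\<lambda>\<tau>. H (x k + \<tau> *\<^sub>R (x (Suc k) - x k))))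
                (G k) (x (Suc k) - x k)) (ui k)"
    and update: "\<And>k. G (Suc k) = BFGS (H (x (Suc k)))
        ((1 + M * local_norm H (x k) (x (Suc k) - x k) / 2)\<^sup>2 *\<^sub>R
           BFGS (integral {0..1} (\<lambda>\<tau>. H (x k + \<tau> *\<^sub>R (x (Suc k) - x k))))
                (G k) (x (Suc k) - x k))
        (axis (ui k) 1)"
    and nonzero: "\<And>k. k < t \<Longrightarrow> g (x k) \<noteq> 0"
  shows "loewner_le (H (x t)) (G t) \<and>
         loewner_le (G t)
           ((exp (2 * M * (\<Sum>i<t. local_norm H (x i) (x (Suc i) - x i))) * (L / \<mu>))
              *\<^sub>R H (x t))"
proof -
  note bounds = hessian_quadratic_form_bounds[OF grad hess sconv lip]
  interpret self_concordant_hessian M H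
  proof
    fix y and v :: "real^'n"
    assume "v \<noteq> 0"
    with mu_pos have "0 < \<mu> * (norm v)\<^sup>2" by simp
    with bounds(1)[of v y] show "0 < v \<bullet> (H y *v v)" by linarith
  qed (use ssc M_pos hessian_transpose[OF grad hess] in auto)
  have "v \<bullet> (mat 1 *v v) = (norm v)\<^sup>2" for v :: "real^'n"
    by (simp add: power2_norm_eq_inner)
  then have "loewner_le (H (x 0)) (G 0)" "loewner_le (G 0) ((L / \<mu>) *\<^sub>R H (x 0))"
    using bounds(1)[of _ "x 0"] bounds(2)[of _ "x 0"] mu_pos mu_le_L
    by (auto simp: loewner_le_def G0 field_simps mult_left_mono)
  moreover have "1 \<le> L / \<mu>" using mu_pos mu_le_L by simp
  \<comment> \<open>The bounds hold for every coordinate direction, so the greedy choice of \<open>ui\<close> is not needed.\<close>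
  ultimately show ?thesis
    by (intro sharpened_BFGS_loewner_bounds[where d = "\<lambda>k. g (x k)" and ui = ui])
      (simp_all add: G0 transpose_scalar step update[folded mean_hessian_def] nonzero)
qed

end
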